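(* Let $D$ be $\mathbb{C}$ or the quaternions $\mathbb{H}$, viewed as a real algebra, and let $n \geq 1$. Let \[ f_n : D^n \times D^n \to D^n,\quad ((a_1,\ldots,a_n),(b_1,\ldots,b_n)) \mapsto (a_1 b_1, \ldots, a_n b_n) \] be componentwise multiplication, regarded as an $\mathbb{R}$-bilinear map. Then $Q(f_n) = n q$, where $q = Q(f_1)$ is the subrank of the multiplication map $D\times D\to D$. (In particular, $Q(f_n)=n$ for $D=\mathbb{C}$ and $Q(f_n)=2n$ for $D=\mathbb{H}$.)
   Context: For an $\mathbb{R}$-bilinear map $f : U \times V \to W$ between finite-dimensional real vector spaces, its subrank $Q(f)$ is the largest $r$ such that there exist $\mathbb{R}$-linear maps $\varphi_1 : \mathbb{R}^r \to U$, $\varphi_2 : \mathbb{R}^r \to V$, $\varphi_3 : W \to \mathbb{R}^r$ with $\varphi_3(f(\varphi_1(a), \varphi_2(b))) = (a_1b_1,\ldots,a_rb_r)$ for all $a,b \in \mathbb{R}^r$. $\mathbb{H}$ denotes Hamilton's quaternions with basis $1,i,j,k$ and $i^2=j^2=k^2=-1$, $ij=k$, $jk=i$, $ki=j$. *)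

theory Defs
  imports "HOL-Analysis.Analysis"
begin

datatype quat = Quat (qre: real) (qi: real) (qj: real) (qk: real)

instantiation quat :: real_vector
begin
definition "0 = Quat 0 0 0 0"
definition "x + y = Quat (qre x + qre y) (qi x + qi y) (qj x + qj y) (qk x + qk y)"
definition "- x = Quat (- qre x) (- qi x) (- qj x) (- qk x)"
definition "x - y = Quat (qre x - qre y) (qi x - qi y) (qj x - qj y) (qk x - qk y)"
definition "scaleR c x = Quat (c * qre x) (c * qi x) (c * qj x) (c * qk x)"
instance
  by standard (simp_all add: zero_quat_def plus_quat_def uminus_quat_def minus_quat_def
      scaleR_quat_def algebra_simps)
end

text \<open>Hamilton product: basis 1,i,j,k with i^2=j^2=k^2=-1, ij=k, jk=i, ki=j.\<close>
instantiation quat :: times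
begin
definition "x * y = Quat
   (qre x * qre y - qi x * qi y - qj x * qj y - qk x * qk y)
   (qre x * qi y + qi x * qre y + qj x * qk y - qk x * qj y)
   (qre x * qj y - qi x * qk y + qj x * qre y + qk x * qi y)
   (qre x * qk y + qi x * qj y - qj x * qi y + qk x * qre y)"
instance ..
end

text \<open>A linear map phi1 : R^r -> U is written via the images u_0..u_{r-1} of the standard basis,
  a |-> sum_{j<r} a_j u_j; similarly phi2.  A linear map phi3 : W -> R^r is given by its r
  coordinate functionals l_0..l_{r-1}, each R-linear.  Vectors of R^r are the first r
  coordinates of a :: nat => real.\<close>

definition subrank_witness ::
  "('u::real_vector \<Rightarrow> 'v::real_vector \<Rightarrow> 'w::real_vector) \<Rightarrow> nat \<Rightarrow> bool" where
  "subrank_witness f r \<longleftrightarrow>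
     (\<exists>(u :: nat \<Rightarrow> 'u) (v :: nat \<Rightarrow> 'v) (l :: nat \<Rightarrow> 'w \<Rightarrow> real).
        (\<forall>i<r. linear (l i)) \<and>
        (\<forall>(a :: nat \<Rightarrow> real) (b :: nat \<Rightarrow> real). \<forall>i<r.
            l i (f (\<Sum>j<r. a j *\<^sub>R u j) (\<Sum>j<r. b j *\<^sub>R v j)) = a i * b i))"

definition subrank ::
  "('u::real_vector \<Rightarrow> 'v::real_vector \<Rightarrow> 'w::real_vector) \<Rightarrow> nat" where
  "subrank f = (GREATEST r. subrank_witness f r)"

end

theory Submission
  imports Defs
begin

(*
  The lower bound places a witness for the multiplication of D in every coordinate.

  The upper bound holds for every bilinear m : D \<times> D \<rightarrow> D without zero divisors on a space
  of dimension at most 2q: a witness (u_j, v_j, l_j), j \<in> J, for componentwise multiplication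
  whose vectors are supported on a set I of coordinates has |J| \<le> q |I|.  By induction on |I|:
  let C be the support of some u_j0 and M the multiplication by u_j0.  On B = span {v_j},
  of dimension |J|, the kernel of M consists of vectors vanishing on C, and a dual basis of
  it yields a witness on I - C of size dim (B \<inter> ker M).  The image M B lies in D^C and is
  annihilated by every l_i with i \<noteq> j0, so dim (M B) \<le> dim K + 1, where K is the common
  kernel of the l_i in D^C.  Correcting the l_i along the dual family of a complement of K
  in D^C yields a second witness on I - C, of size |J| - (dim D^C - dim K).  Adding the two
  inequalities gives 2 |J| \<le> 2q |I - C| + dim D^C + 1 \<le> 2q |I| + 1.
*)

section \<open>Biorthogonal systems\<close>

lemma biorthogonal_independent:
  fixes w :: "'i \<Rightarrow> 'v::real_vector" and \<phi> :: "'i \<Rightarrow> 'v \<Rightarrow> real"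
  assumes "\<forall>k\<in>J. linear (\<phi> k)" "\<forall>j\<in>J. \<forall>k\<in>J. \<phi> k (w j) = (if k = j then 1 else 0)"
  shows "inj_on w J" "independent (w ` J)"
proof -
  show "inj_on w J"
    using assms(2) by (intro inj_onI) (metis zero_neq_one)
  show "independent (w ` J)"
    unfolding dependent_def
  proof safe
    fix j assume j: "j \<in> J" "w j \<in> span (w ` J - {w j})"
    have "\<phi> j x = 0" if "x \<in> w ` J - {w j}" for x
      using that j(1) assms(2) by auto
    then have "\<phi> j (w j) = 0"
      using linear_eq_0_on_span[OF _ _ j(2)] assms(1) j(1) by blast
    then show False using assms(2) j(1) by simp
  qed
qed

lemma biorthogonal_expansion:
  fixes w :: "'i \<Rightarrow> 'v::real_vector" and \<phi> :: "'i \<Rightarrow> 'v \<Rightarrow> real"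
  assumes "finite J" "\<forall>k\<in>J. linear (\<phi> k)"
    and "\<forall>j\<in>J. \<forall>k\<in>J. \<phi> k (w j) = (if k = j then 1 else 0)" and "x \<in> span (w ` J)"
  shows "x = (\<Sum>j\<in>J. \<phi> j x *\<^sub>R w j)"
proof -
  let ?P = "\<lambda>x. x - (\<Sum>j\<in>J. \<phi> j x *\<^sub>R w j)"
  have "linear ?P"
    by (rule linearI) (use assms(2) in \<open>simp_all add: linear_add linear_scale scaleR_add_left
        sum.distrib scaleR_sum_right algebra_simps\<close>)
  moreover have "?P (w k) = 0" if "k \<in> J" for k
  proof -
    have "(\<Sum>j\<in>J. \<phi> j (w k) *\<^sub>R w j) = (\<Sum>j\<in>J. if j = k then w j else 0)"
      using assms(3) that by (intro sum.cong) auto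
    then show ?thesis using assms(1) that by simp
  qed
  ultimately have "?P x = 0" using linear_eq_0_on_span[OF _ _ assms(4)] by blast
  then show ?thesis by simp
qed

section \<open>Finite-dimensional real vector spaces\<close>

locale finite_dimensional_real_vector =
  fixes basis :: "'v::real_vector set"
  assumes finite_basis: "finite basis"
    and independent_basis: "independent basis"
    and span_basis: "span basis = UNIV"
begin

sublocale fd: finite_dimensional_vector_space "scaleR :: real \<Rightarrow> 'v \<Rightarrow> 'v" basis
  rewrites "module.dependent (*\<^sub>R) = dependent"
    and "module.representation (*\<^sub>R) = representation"
    and "module.subspace (*\<^sub>R) = subspace"
    and "module.span (*\<^sub>R) = span"
    and "vector_space.extend_basis (*\<^sub>R) = extend_basis"
    and "vector_space.dim (*\<^sub>R) = dim"
    and "Vector_Spaces.linear (*\<^sub>R) (*\<^sub>R) = linear"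
    and "Vector_Spaces.linear (*) (*\<^sub>R) = linear"
  using finite_basis independent_basis span_basis
  by unfold_locales (auto simp: dependent_raw_def representation_raw_def subspace_raw_def
      span_raw_def extend_basis_raw_def dim_raw_def linear_def real_scaleR_def[abs_def])

lemma subspace_complement:
  fixes S T :: "'v set"
  assumes "subspace S" "subspace T" "T \<subseteq> S"
  obtains N where "finite N" "independent N" "N \<subseteq> S" "card N + dim T = dim S"
    "span N \<inter> T \<subseteq> {0}" "S \<subseteq> {x + y |x y. x \<in> span N \<and> y \<in> T}"
proof -
  obtain BT where BT: "finite BT" "BT \<subseteq> T" "independent BT" "span BT = T" "card BT = dim T"
    using fd.basis_subspace_exists[OF assms(2)] by blast
  obtain BS where BS: "BT \<subseteq> BS" "BS \<subseteq> S" "independent BS" "S \<subseteq> span BS"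
    using maximal_independent_subset_extend[of BT S] BT(2,3) assms(3) by blast
  define N where "N = BS - BT"
  have "finite BS" using BS(3) fd.finiteI_independent by blast
  have "card BS = dim S" using basis_card_eq_dim[OF BS(2,4,3)] .
  then have card: "card N + dim T = dim S"
    unfolding N_def using card_Diff_subset[OF BT(1) BS(1)] card_mono[OF \<open>finite BS\<close> BS(1)] BT(5)
    by simp
  have indep: "independent N" using BS(3) independent_mono[of BS N] unfolding N_def by blast
  have "span N \<subseteq> S" using span_minimal[OF _ assms(1)] BS(2) unfolding N_def by blast
  then have "{x + y |x y. x \<in> span N \<and> y \<in> T} \<subseteq> S"
    using assms(1,3) subspace_add by blast
  moreover have "BS = N \<union> BT" using BS(1) unfolding N_def by blast
  then have cover: "S \<subseteq> {x + y |x y. x \<in> span N \<and> y \<in> T}"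
    using BS(4) BT(4) by (simp add: span_Un)
  ultimately have decomposition: "S = {x + y |x y. x \<in> span N \<and> y \<in> T}" by blast
  have "dim {x + y |x y. x \<in> span N \<and> y \<in> T} + dim (span N \<inter> T) = dim (span N) + dim T"
    by (rule fd.dim_sums_Int[OF subspace_span assms(2)])
  then have "dim (span N \<inter> T) = 0"
    using decomposition card dim_eq_card_independent[OF indep] by simp
  then have "span N \<inter> T \<subseteq> {0}" by (simp add: fd.dim_eq_0)
  moreover have "finite N" "N \<subseteq> S" using \<open>finite BS\<close> BS(2) unfolding N_def by auto
  ultimately show ?thesis using that card cover indep by blast
qed

lemma dim_kernel_add_dim_image:
  fixes f :: "'v \<Rightarrow> 'w::real_vector" and S :: "'v set"
  assumes "linear f" "subspace S"
  shows "dim (S \<inter> {x. f x = 0}) + dim (f ` S) = dim S"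
proof -
  let ?T = "S \<inter> {x. f x = 0}"
  have "subspace ?T"
    using assms(2) linear_subspace_kernel[OF assms(1)] by (rule subspace_inter)
  then obtain N where N: "finite N" "independent N" "N \<subseteq> S" "card N + dim ?T = dim S"
    "span N \<inter> ?T \<subseteq> {0}" "S \<subseteq> {x + y |x y. x \<in> span N \<and> y \<in> ?T}"
    using subspace_complement[OF assms(2)] by blast
  have "span N \<subseteq> S" using span_minimal[OF N(3) assms(2)] .
  have "inj_on f (span N)"
  proof (rule inj_onI)
    fix x y assume "x \<in> span N" "y \<in> span N" "f x = f y"
    then have "x - y \<in> span N" "f (x - y) = 0"
      using span_diff linear_diff[OF assms(1)] by auto
    then have "x - y \<in> span N \<inter> ?T" using \<open>span N \<subseteq> S\<close> by blast
    then show "x = y" using N(5) by auto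
  qed
  have "f ` S = f ` span N"
  proof
    show "f ` S \<subseteq> f ` span N"
    proof
      fix z assume "z \<in> f ` S"
      then obtain s where "s \<in> S" "z = f s" by blast
      then obtain x y where "x \<in> span N" "y \<in> ?T" "z = f (x + y)"
        using N(6) by blast
      then show "z \<in> f ` span N" using linear_add[OF assms(1)] by auto
    qed
  qed (use \<open>span N \<subseteq> S\<close> in blast)
  also have "\<dots> = span (f ` N)" using linear_span_image[OF assms(1)] by simp
  finally have "dim (f ` S) = card (f ` N)"
    using linear_independent_injective_image[OF assms(1) N(2) \<open>inj_on f (span N)\<close>]
    by (simp add: dim_eq_card_independent)
  also have "\<dots> = card N"
    using card_image inj_on_subset[OF \<open>inj_on f (span N)\<close> span_superset] by blast
  finally show ?thesis using N(4) by simp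
qed

lemma dim_le_dim_Int_hyperplane_add_1:
  fixes \<phi> :: "'v \<Rightarrow> real" and S :: "'v set"
  assumes "linear \<phi>" "subspace S"
  shows "dim S \<le> dim (S \<inter> {x. \<phi> x = 0}) + 1"
  using dim_kernel_add_dim_image[OF assms] eucl.dim_subset_UNIV[of "\<phi> ` S"] by simp

lemma biorthogonal_selection:
  fixes \<phi> :: "'i \<Rightarrow> 'v \<Rightarrow> real" and Y :: "'v set"
  assumes "finite Y" "independent Y" "\<forall>k\<in>K. linear (\<phi> k)"
    and "\<And>x. x \<in> span Y \<Longrightarrow> \<forall>k\<in>K. \<phi> k x = 0 \<Longrightarrow> x = 0"
  obtains I w where "I \<subseteq> K" "finite I" "card I = card Y" "w ` I \<subseteq> span Y"
    "span Y \<subseteq> span (w ` I)" "\<forall>j\<in>I. \<forall>k\<in>I. \<phi> k (w j) = (if k = j then 1 else 0)"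
proof -
  have "\<exists>I w. I \<subseteq> K \<and> finite I \<and> card I = card Y \<and> w ` I \<subseteq> span Y \<and>
      (\<forall>j\<in>I. \<forall>k\<in>I. \<phi> k (w j) = (if k = j then 1 else 0))"
    using assms(1,2,4)
  proof (induction Y rule: finite_induct)
    case empty
    show ?case by (rule exI[of _ "{}"]) simp
  next
    case (insert y Y)
    have "independent Y" "y \<notin> span Y"
      using insert.prems(1) insert.hyps(2) by (simp_all add: independent_insert)
    have span_Y: "span Y \<subseteq> span (insert y Y)" by (rule span_mono) blast
    then obtain I w where I: "I \<subseteq> K" "finite I" "card I = card Y" "w ` I \<subseteq> span Y"
      and w: "\<forall>j\<in>I. \<forall>k\<in>I. \<phi> k (w j) = (if k = j then 1 else 0)"
      using insert.IH[OF \<open>independent Y\<close>] insert.prems(2) by blast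
    have lin: "linear (\<phi> k)" if "k \<in> K" for k using assms(3) that by blast
    define z where "z = y - (\<Sum>j\<in>I. \<phi> j y *\<^sub>R w j)"
    have sum_Y: "(\<Sum>j\<in>I. \<phi> j y *\<^sub>R w j) \<in> span Y"
      using I(4) by (intro span_sum span_scale) auto
    have "z \<notin> span Y"
    proof
      assume "z \<in> span Y"
      then have "z + (\<Sum>j\<in>I. \<phi> j y *\<^sub>R w j) \<in> span Y" using sum_Y by (rule span_add)
      then show False using \<open>y \<notin> span Y\<close> unfolding z_def by simp
    qed
    have "z \<in> span (insert y Y)"
      unfolding z_def using sum_Y span_Y by (intro span_diff) (auto intro: span_base)
    have z_I: "\<phi> i z = 0" if "i \<in> I" for i
    proof -
      have "\<phi> i z = \<phi> i y - (\<Sum>j\<in>I. \<phi> j y * \<phi> i (w j))"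
        unfolding z_def using lin I(1) that by (simp add: linear_diff linear_sum linear_scale subset_iff)
      also have "(\<Sum>j\<in>I. \<phi> j y * \<phi> i (w j)) = (\<Sum>j\<in>I. if j = i then \<phi> j y else 0)"
        using w that by (intro sum.cong) auto
      also have "\<dots> = \<phi> i y" using that I(2) by simp
      finally show ?thesis by simp
    qed
    obtain k where k: "k \<in> K" "\<phi> k z \<noteq> 0"
      using insert.prems(2)[OF \<open>z \<in> span (insert y Y)\<close>] \<open>z \<notin> span Y\<close> span_zero by blast
    then have "k \<notin> I" using z_I by blast
    define z' where "z' = (1 / \<phi> k z) *\<^sub>R z"
    have z': "\<phi> i z' = (if i = k then 1 else 0)" if "i \<in> insert k I" for i
    proof -
      have "\<phi> i z' = \<phi> i z / \<phi> k z"
        unfolding z'_def using lin[of i] that k(1) I(1) by (auto simp: linear_scale)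
      then show ?thesis using that z_I k(2) by auto
    qed
    define w' where "w' = (\<lambda>j. if j = k then z' else w j - \<phi> k (w j) *\<^sub>R z')"
    have "\<phi> i (w' j) = (if i = j then 1 else 0)" if "j \<in> insert k I" "i \<in> insert k I" for i j
    proof (cases "j = k")
      case False
      then have "\<phi> i (w' j) = \<phi> i (w j) - \<phi> k (w j) * \<phi> i z'"
        unfolding w'_def using lin[of i] that(2) k(1) I(1) by (auto simp: linear_diff linear_scale)
      then show ?thesis using that z' w \<open>k \<notin> I\<close> False by auto
    qed (use that z' w'_def in auto)
    moreover have "w' j \<in> span (insert y Y)" if "j \<in> insert k I" for j
    proof -
      have "z' \<in> span (insert y Y)"
        unfolding z'_def using \<open>z \<in> span (insert y Y)\<close> by (rule span_scale)
      moreover have "w j \<in> span (insert y Y)" if "j \<in> I" using that I(4) span_Y by blast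
      ultimately show ?thesis unfolding w'_def using that by (auto intro: span_diff span_scale)
    qed
    moreover have "card (insert k I) = card (insert y Y)"
      using I(2,3) \<open>k \<notin> I\<close> insert.hyps by simp
    ultimately show ?case using I(1,2) k(1) by (intro exI[of _ "insert k I"] exI[of _ w']) auto
  qed
  then obtain I w where I: "I \<subseteq> K" "finite I" "card I = card Y" "w ` I \<subseteq> span Y"
    and w: "\<forall>j\<in>I. \<forall>k\<in>I. \<phi> k (w j) = (if k = j then 1 else 0)"
    by blast
  have "inj_on w I" "independent (w ` I)"
    using biorthogonal_independent[OF _ w] assms(3) I(1) by auto
  then have "span Y \<subseteq> span (w ` I)"
    using fd.card_ge_dim_independent[OF I(4)] I(3) assms(2) by (simp add: card_image dim_eq_card_independent)
  with I w that show ?thesis by blast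
qed

end

lemma finite_dimensional_real_vectorI:
  fixes G :: "'v::real_vector set"
  assumes "finite G" "span G = UNIV"
  obtains B :: "'v set" where "finite_dimensional_real_vector B"
proof -
  obtain B where "B \<subseteq> G" "independent B" "G \<subseteq> span B"
    using maximal_independent_subset[of G] by blast
  moreover have "span B = UNIV"
    using span_mono[OF \<open>G \<subseteq> span B\<close>] assms(2) by (simp add: top.extremum_unique span_span)
  ultimately have "finite_dimensional_real_vector B"
    using finite_subset[OF _ assms(1)] by (simp add: finite_dimensional_real_vector_def)
  then show ?thesis by (rule that)
qed

section \<open>Subrank witnesses of componentwise multiplication\<close>

lemma subrank_witness_iff:
  fixes f :: "'u::real_vector \<Rightarrow> 'v::real_vector \<Rightarrow> 'w::real_vector"
  assumes "bilinear f"
  shows "subrank_witness f r \<longleftrightarrow> (\<exists>(u :: nat \<Rightarrow> 'u) (v :: nat \<Rightarrow> 'v) (l :: nat \<Rightarrow> 'w \<Rightarrow> real).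
    (\<forall>i<r. linear (l i)) \<and>
    (\<forall>i<r. \<forall>j<r. \<forall>k<r. l i (f (u j) (v k)) = (if i = j \<and> j = k then 1 else 0)))"
proof
  assume "subrank_witness f r"
  then obtain u v and l :: "nat \<Rightarrow> 'w \<Rightarrow> real" where l: "\<forall>i<r. linear (l i)"
    and uv: "\<And>a b i. i < r \<Longrightarrow> l i (f (\<Sum>j<r. a j *\<^sub>R u j) (\<Sum>j<r. b j *\<^sub>R v j)) = a i * b i"
    unfolding subrank_witness_def by blast
  have unit: "(\<Sum>t<r. (if t = j then 1 else 0) *\<^sub>R x t) = x j"
    if "j < r" for j and x :: "nat \<Rightarrow> 'x::real_vector"
  proof -
    have "(\<Sum>t<r. (if t = j then 1 else 0) *\<^sub>R x t) = (\<Sum>t<r. if t = j then x t else 0)"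
      by (intro sum.cong) auto
    then show ?thesis using that by simp
  qed
  have "l i (f (u j) (v k)) = (if i = j \<and> j = k then 1 else 0)" if "i < r" "j < r" "k < r" for i j k
    using uv[OF that(1), of "\<lambda>t. if t = j then 1 else 0" "\<lambda>t. if t = k then 1 else 0"]
      unit[OF that(2), of u] unit[OF that(3), of v] by simp
  with l show "\<exists>u v (l :: nat \<Rightarrow> 'w \<Rightarrow> real). (\<forall>i<r. linear (l i)) \<and>
      (\<forall>i<r. \<forall>j<r. \<forall>k<r. l i (f (u j) (v k)) = (if i = j \<and> j = k then 1 else 0))"
    by (intro exI[of _ u] exI[of _ v] exI[of _ l]) auto
next
  assume "\<exists>u v (l :: nat \<Rightarrow> 'w \<Rightarrow> real). (\<forall>i<r. linear (l i)) \<and>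
      (\<forall>i<r. \<forall>j<r. \<forall>k<r. l i (f (u j) (v k)) = (if i = j \<and> j = k then 1 else 0))"
  then obtain u v and l :: "nat \<Rightarrow> 'w \<Rightarrow> real" where l: "\<forall>i<r. linear (l i)"
    and delta: "\<forall>i<r. \<forall>j<r. \<forall>k<r. l i (f (u j) (v k)) = (if i = j \<and> j = k then 1 else 0)"
    by blast
  have "l i (f (\<Sum>j<r. a j *\<^sub>R u j) (\<Sum>k<r. b k *\<^sub>R v k)) = a i * b i"
    if i: "i < r" for a b :: "nat \<Rightarrow> real" and i
  proof -
    have "l i (f (\<Sum>j<r. a j *\<^sub>R u j) (\<Sum>k<r. b k *\<^sub>R v k))
        = (\<Sum>(j, k)\<in>{..<r} \<times> {..<r}. a j * b k * l i (f (u j) (v k)))"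
      using l i by (simp add: bilinear_sum[OF assms] bilinear_lmul[OF assms] bilinear_rmul[OF assms]
          linear_sum linear_scale case_prod_unfold mult.commute)
    also have "\<dots> = (\<Sum>p\<in>{..<r} \<times> {..<r}. if p = (i, i) then a i * b i else 0)"
    proof (intro sum.cong refl)
      fix p assume "p \<in> {..<r} \<times> {..<r}"
      then obtain j k where p: "p = (j, k)" "j < r" "k < r" by blast
      then have "l i (f (u j) (v k)) = (if i = j \<and> j = k then 1 else 0)" using delta i by blast
      then show "(case p of (j, k) \<Rightarrow> a j * b k * l i (f (u j) (v k)))
          = (if p = (i, i) then a i * b i else 0)"
        using p by auto
    qed
    finally show ?thesis using i by simp
  qed
  with l show "subrank_witness f r" unfolding subrank_witness_def by blast
qed

lemma subrank_eqI:
  assumes "subrank_witness f n" "\<And>r. subrank_witness f r \<Longrightarrow> r \<le> n"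
  shows "subrank f = n"
  unfolding subrank_def by (rule Greatest_equality) (use assms in auto)

definition vec_mul :: "('a \<Rightarrow> 'b \<Rightarrow> 'c) \<Rightarrow> 'a^'n \<Rightarrow> 'b^'n \<Rightarrow> 'c^'n" where
  "vec_mul m a b = (\<chi> c. m (a $ c) (b $ c))"

lemma vec_mul_nth [simp]: "vec_mul m a b $ c = m (a $ c) (b $ c)"
  by (simp add: vec_mul_def)

lemma bilinear_vec_mul:
  assumes "bilinear m"
  shows "bilinear (vec_mul m :: ('a::real_vector)^'n \<Rightarrow> ('b::real_vector)^'n \<Rightarrow> ('c::real_vector)^'n)"
  unfolding bilinear_def
  by (intro allI conjI linearI)
    (simp_all add: vec_eq_iff bilinear_ladd[OF assms] bilinear_lmul[OF assms]
      bilinear_radd[OF assms] bilinear_rmul[OF assms])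

lemma subrank_witness_vec_mul:
  fixes m :: "'a::real_vector \<Rightarrow> 'b::real_vector \<Rightarrow> 'c::real_vector"
  assumes "bilinear m" "subrank_witness m s"
  shows "subrank_witness (vec_mul m :: 'a^'n \<Rightarrow> 'b^'n \<Rightarrow> 'c^'n) (CARD('n) * s)"
proof -
  obtain u v and l :: "nat \<Rightarrow> 'c \<Rightarrow> real" where l: "\<forall>i<s. linear (l i)"
    and delta: "\<forall>i<s. \<forall>j<s. \<forall>k<s. l i (m (u j) (v k)) = (if i = j \<and> j = k then 1 else 0)"
    using assms by (auto simp: subrank_witness_iff)
  have fin: "finite ((UNIV :: 'n set) \<times> {..<s})" by (intro finite_cartesian_product) simp_all
  have card: "card ((UNIV :: 'n set) \<times> {..<s}) = CARD('n) * s"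
    by (simp only: card_cartesian_product card_lessThan)
  obtain h where h: "bij_betw h {0..<CARD('n) * s} ((UNIV :: 'n set) \<times> {..<s})"
    using ex_bij_betw_nat_finite[OF fin] unfolding card by (elim exE)
  define U :: "nat \<Rightarrow> 'a^'n" where "U p = axis (fst (h p)) (u (snd (h p)))" for p
  define V :: "nat \<Rightarrow> 'b^'n" where "V p = axis (fst (h p)) (v (snd (h p)))" for p
  define L :: "nat \<Rightarrow> 'c^'n \<Rightarrow> real" where "L p x = l (snd (h p)) (x $ fst (h p))" for p x
  have h_eq: "h i = h j \<longleftrightarrow> i = j" if "i < CARD('n) * s" "j < CARD('n) * s" for i j
    using bij_betw_imp_inj_on[OF h] that by (auto dest: inj_onD)
  have h_snd: "snd (h i) < s" if "i < CARD('n) * s" for i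
    using bij_betwE[OF h] that by (simp add: mem_Times_iff)
  have "linear (L i)" if "i < CARD('n) * s" for i
  proof -
    have "linear (\<lambda>x :: 'c^'n. x $ fst (h i))" by (rule linearI) simp_all
    then show ?thesis
      using linear_compose l h_snd[OF that] unfolding L_def comp_def by blast
  qed
  moreover have "L i (vec_mul m (U j) (V k)) = (if i = j \<and> j = k then 1 else 0)"
    if "i < CARD('n) * s" "j < CARD('n) * s" "k < CARD('n) * s" for i j k
  proof (cases "fst (h i) = fst (h j) \<and> fst (h i) = fst (h k)")
    case True
    then have "L i (vec_mul m (U j) (V k)) = l (snd (h i)) (m (u (snd (h j))) (v (snd (h k))))"
      by (auto simp: L_def U_def V_def axis_def)
    also have "\<dots> = (if snd (h i) = snd (h j) \<and> snd (h j) = snd (h k) then 1 else 0)"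
      using delta h_snd that by blast
    also have "(snd (h i) = snd (h j) \<and> snd (h j) = snd (h k)) \<longleftrightarrow> i = j \<and> j = k"
      using True h_eq[OF that(1,2)] h_eq[OF that(2,3)] by (auto simp: prod_eq_iff)
    finally show ?thesis .
  next
    case False
    then have "L i (vec_mul m (U j) (V k)) = l (snd (h i)) 0"
      by (auto simp: L_def U_def V_def axis_def bilinear_lzero[OF assms(1)] bilinear_rzero[OF assms(1)])
    also have "\<dots> = 0" using l h_snd[OF that(1)] linear_0 by blast
    finally show ?thesis using False by auto
  qed
  ultimately show ?thesis
    using bilinear_vec_mul[OF assms(1)] by (subst subrank_witness_iff) blast+
qed

definition supported_on :: "'n set \<Rightarrow> ('a::zero)^'n \<Rightarrow> bool" where
  "supported_on I x \<longleftrightarrow> (\<forall>c. c \<notin> I \<longrightarrow> x $ c = 0)"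

definition vec_restrict :: "'n set \<Rightarrow> ('a::zero)^'n \<Rightarrow> 'a^'n" where
  "vec_restrict I x = (\<chi> c. if c \<in> I then x $ c else 0)"

lemma vec_restrict_nth [simp]: "vec_restrict I x $ c = (if c \<in> I then x $ c else 0)"
  by (simp add: vec_restrict_def)

lemma subspace_supported_on: "subspace {x :: ('a::real_vector)^'n. supported_on I x}"
  by (auto simp: subspace_def supported_on_def)

lemma supported_on_subset_span_axis:
  fixes E :: "'a::real_vector set" and C :: "'n::finite set"
  assumes "span E = UNIV"
  shows "{x :: 'a^'n. supported_on C x} \<subseteq> span ((\<lambda>(c, e). axis c e) ` (C \<times> E))"
proof
  fix x :: "'a^'n" assume "x \<in> {x. supported_on C x}"
  then have x: "x = (\<Sum>c\<in>C. axis c (x $ c))"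
    by (auto simp: vec_eq_iff axis_def supported_on_def)
  have "axis c (x $ c) \<in> span ((\<lambda>(c, e). axis c e) ` (C \<times> E))" if "c \<in> C" for c
  proof -
    have "linear (axis c :: 'a \<Rightarrow> 'a^'n)" by (rule linearI) (auto simp: axis_def vec_eq_iff)
    then have "axis c (x $ c) \<in> span (axis c ` E)"
      using assms by (simp add: linear_span_image)
    also have "\<dots> \<subseteq> span ((\<lambda>(c, e). axis c e) ` (C \<times> E))"
      by (rule span_mono) (use that in auto)
    finally show ?thesis .
  qed
  then show "x \<in> span ((\<lambda>(c, e). axis c e) ` (C \<times> E))"
    by (subst x) (rule span_sum)
qed

section \<open>Nonsingular bilinear maps\<close>

lemma subspace_common_kernel:
  assumes "\<forall>i\<in>A. linear (f i)"
  shows "subspace {x. \<forall>i\<in>A. f i x = 0}"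
  using assms by (auto simp: subspace_def linear_0 linear_add linear_scale)

locale nonsingular_bilinear =
  fixes m :: "'a::real_vector \<Rightarrow> 'a \<Rightarrow> 'a" and E :: "'a set" and q :: nat
  assumes bilinear: "bilinear m"
    and no_zero_divisors: "m x y = 0 \<Longrightarrow> x = 0 \<or> y = 0"
    and finite_E: "finite E" and span_E: "span E = UNIV" and card_E: "card E \<le> 2 * q"
begin

lemma mult_zero_left [simp]: "m 0 y = 0"
  by (rule bilinear_lzero[OF bilinear])

lemma mult_zero_right [simp]: "m x 0 = 0"
  by (rule bilinear_rzero[OF bilinear])

lemma linear_vec_mul_right: "linear (vec_mul m a :: 'a^'n \<Rightarrow> 'a^'n)"
  by (rule linearI) (simp_all add: vec_eq_iff bilinear_radd[OF bilinear] bilinear_rmul[OF bilinear])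

definition supported_witness ::
  "'n set \<Rightarrow> nat set \<Rightarrow> (nat \<Rightarrow> 'a^'n) \<Rightarrow> (nat \<Rightarrow> 'a^'n) \<Rightarrow> (nat \<Rightarrow> 'a^'n \<Rightarrow> real) \<Rightarrow> bool"
  where "supported_witness I J u v l \<longleftrightarrow> finite J \<and> (\<forall>i\<in>J. linear (l i)) \<and>
    (\<forall>j\<in>J. supported_on I (u j) \<and> supported_on I (v j)) \<and>
    (\<forall>i\<in>J. \<forall>j\<in>J. \<forall>k\<in>J. l i (vec_mul m (u j) (v k)) = (if i = j \<and> j = k then 1 else 0))"

lemma dim_supported_on_le: "dim {x :: 'a^'n. supported_on C x} \<le> 2 * q * card C"
proof -
  have fin: "finite (C \<times> E)"
    by (intro finite_cartesian_product finite_E) simp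
  have "dim {x :: 'a^'n. supported_on C x} \<le> card ((\<lambda>(c, e). axis c e) ` (C \<times> E) :: ('a^'n) set)"
    by (rule dim_le_card[OF supported_on_subset_span_axis[OF span_E] finite_imageI[OF fin]])
  also have "\<dots> \<le> card (C \<times> E)"
    by (rule card_image_le[OF fin])
  also have "\<dots> \<le> 2 * q * card C"
    using card_E by (simp add: card_cartesian_product)
  finally show ?thesis .
qed

lemma finite_dimensional_real_vector_vec:
  obtains B :: "('a^'n) set" where "finite_dimensional_real_vector B"
proof -
  let ?G = "(\<lambda>(c, e). axis c e) ` (UNIV \<times> E) :: ('a^'n) set"
  have "UNIV \<subseteq> span ?G"
    using supported_on_subset_span_axis[OF span_E, of UNIV] by (simp add: supported_on_def)
  then have span_G: "span ?G = UNIV" by (rule top.extremum_uniqueI)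
  have finite_G: "finite ?G"
    by (intro finite_imageI finite_cartesian_product finite_E) simp
  show ?thesis by (rule finite_dimensional_real_vectorI[OF finite_G span_G that])
qed

end

locale supported_witness_step =
  nonsingular_bilinear m E q + finite_dimensional_real_vector basis
  for m :: "'a::real_vector \<Rightarrow> 'a \<Rightarrow> 'a" and E q and basis :: "('a^'n::finite) set" +
  fixes I :: "'n set" and J :: "nat set" and u v :: "nat \<Rightarrow> 'a^'n"
    and l :: "nat \<Rightarrow> 'a^'n \<Rightarrow> real" and j0 :: nat
  assumes witness: "supported_witness I J u v l" and j0_in_J: "j0 \<in> J"
begin

lemma finite_J: "finite J"
  and linear_l: "i \<in> J \<Longrightarrow> linear (l i)"
  and supported_u: "j \<in> J \<Longrightarrow> supported_on I (u j)"
  and supported_v: "j \<in> J \<Longrightarrow> supported_on I (v j)"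
  and delta: "i \<in> J \<Longrightarrow> j \<in> J \<Longrightarrow> k \<in> J \<Longrightarrow>
    l i (vec_mul m (u j) (v k)) = (if i = j \<and> j = k then 1 else 0)"
  using witness unfolding supported_witness_def by blast+

definition C :: "'n set" where "C = {c. u j0 $ c \<noteq> 0}"

definition V0 :: "('a^'n) set" where "V0 = {x. supported_on C x}"

definition K0 :: "('a^'n) set" where "K0 = V0 \<inter> {x. \<forall>i\<in>J. l i x = 0}"

definition B :: "('a^'n) set" where "B = span (v ` J)"

definition coef :: "nat \<Rightarrow> 'a^'n \<Rightarrow> real" where "coef k b = l k (vec_mul m (u k) b)"

lemma C_subset_I: "C \<subseteq> I"
  using supported_u[OF j0_in_J] unfolding C_def supported_on_def by blast

lemma card_I: "card I = card (I - C) + card C"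
  using card_Diff_subset[OF finite_subset[OF C_subset_I] C_subset_I] card_mono[OF _ C_subset_I] by simp

lemma card_Diff_C_less: "card (I - C) < card I"
proof -
  have "u j0 \<noteq> 0"
  proof
    assume "u j0 = 0"
    then have "vec_mul m (u j0) (v j0) = 0" by (simp add: vec_eq_iff)
    then show False using delta[OF j0_in_J j0_in_J j0_in_J] linear_0[OF linear_l[OF j0_in_J]] by simp
  qed
  then have "C \<noteq> {}" unfolding C_def by (auto simp: vec_eq_iff)
  then show ?thesis using card_I finite_subset[OF C_subset_I] by (simp add: card_gt_0_iff)
qed

lemma linear_coef: "k \<in> J \<Longrightarrow> linear (coef k)"
  unfolding coef_def using linear_compose[OF linear_vec_mul_right linear_l] by (simp add: comp_def)

lemma coef_v: "j \<in> J \<Longrightarrow> k \<in> J \<Longrightarrow> coef k (v j) = (if k = j then 1 else 0)"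
  unfolding coef_def using delta by simp

lemma independent_v: "inj_on v J" "independent (v ` J)"
  using biorthogonal_independent[of J coef v] linear_coef coef_v by auto

lemma dim_B: "dim B = card J"
  unfolding B_def using independent_v by (simp add: dim_eq_card_independent card_image)

lemma expansion_B: "b \<in> B \<Longrightarrow> b = (\<Sum>k\<in>J. coef k b *\<^sub>R v k)"
  unfolding B_def using biorthogonal_expansion[OF finite_J] linear_coef coef_v by blast

lemma supported_B: "b \<in> B \<Longrightarrow> supported_on I b"
  using span_minimal[OF _ subspace_supported_on, of "v ` J" I] supported_v unfolding B_def by blast

lemma l_vec_mul_B:
  assumes "b \<in> B" "i \<in> J" "i' \<in> J"
  shows "l i (vec_mul m (u i') b) = (if i = i' then coef i b else 0)"
proof (rule real_vector.linear_eq_on[of _ _ b "v ` J"])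
  show "linear (\<lambda>b. l i (vec_mul m (u i') b))"
    using linear_compose[OF linear_vec_mul_right linear_l[OF assms(2)]] by (simp add: comp_def)
  show "linear (\<lambda>b. if i = i' then coef i b else 0)"
    using linear_coef[OF assms(2)] by (cases "i = i'") (simp_all add: linear_zero)
  show "b \<in> span (v ` J)" using assms(1) unfolding B_def .
  show "l i (vec_mul m (u i') x) = (if i = i' then coef i x else 0)" if "x \<in> v ` J" for x
    using that assms(2,3) delta coef_v by auto
qed

lemma kernel_witness:
  obtains J' u' v' l' where "supported_witness (I - C) J' u' v' l'"
    "card J' = dim (B \<inter> {b. vec_mul m (u j0) b = 0})"
proof -
  let ?T = "B \<inter> {b. vec_mul m (u j0) b = 0}"
  have "subspace ?T"
    unfolding B_def by (intro subspace_inter subspace_span linear_subspace_kernel linear_vec_mul_right)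
  then obtain Y where Y: "finite Y" "independent Y" "span Y = ?T" "card Y = dim ?T"
    using fd.basis_subspace_exists by metis
  have injective: "x = 0" if "x \<in> span Y" "\<forall>k\<in>J. coef k x = 0" for x
    using that expansion_B[of x] Y(3) by simp
  have "\<forall>k\<in>J. linear (coef k)" using linear_coef by blast
  then obtain J' w where J': "J' \<subseteq> J" "finite J'" "card J' = card Y" "w ` J' \<subseteq> span Y"
    "span Y \<subseteq> span (w ` J')" and w: "\<forall>j\<in>J'. \<forall>k\<in>J'. coef k (w j) = (if k = j then 1 else 0)"
    by (rule biorthogonal_selection[OF Y(1,2) _ injective])
  have w_T: "w j \<in> ?T" if "j \<in> J'" for j using J'(4) Y(3) that by blast
  have w_supported: "supported_on (I - C) (w j)" if "j \<in> J'" for j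
    unfolding supported_on_def
  proof (intro allI impI)
    fix c assume "c \<notin> I - C"
    show "w j $ c = 0"
    proof (cases "c \<in> C")
      case True
      have "m (u j0 $ c) (w j $ c) = 0"
        using w_T[OF that] by (metis (mono_tags) mem_Collect_eq Int_iff vec_mul_nth zero_index)
      then show ?thesis using True no_zero_divisors unfolding C_def by blast
    qed (use \<open>c \<notin> I - C\<close> supported_B w_T[OF that] in \<open>auto simp: supported_on_def\<close>)
  qed
  have "supported_witness (I - C) J' (\<lambda>j. vec_restrict (I - C) (u j)) w l"
    unfolding supported_witness_def
  proof (intro conjI ballI)
    fix i j k assume ijk: "i \<in> J'" "j \<in> J'" "k \<in> J'"
    have "vec_mul m (vec_restrict (I - C) (u j)) (w k) = vec_mul m (u j) (w k)"
      using w_supported[OF ijk(3)] by (auto simp: vec_eq_iff supported_on_def)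
    moreover have "i \<in> J" "j \<in> J" using ijk J'(1) by auto
    then have "l i (vec_mul m (u j) (w k)) = (if i = j then coef i (w k) else 0)"
      using l_vec_mul_B w_T[OF ijk(3)] by blast
    ultimately show "l i (vec_mul m (vec_restrict (I - C) (u j)) (w k)) = (if i = j \<and> j = k then 1 else 0)"
      using w ijk by auto
  qed (use J' linear_l w_supported in \<open>auto simp: supported_on_def\<close>)
  then show ?thesis by (rule that) (simp add: J'(3) Y(4))
qed

lemma deflated_witness:
  obtains J' u' v' l' where "supported_witness (I - C) J' u' v' l'"
    "card J' + dim V0 = card J + dim K0"
proof -
  have "subspace V0" unfolding V0_def by (rule subspace_supported_on)
  moreover have "subspace K0"
    unfolding K0_def using linear_l by (intro subspace_inter \<open>subspace V0\<close> subspace_common_kernel) blast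
  ultimately obtain N where N: "finite N" "independent N" "N \<subseteq> V0" "card N + dim K0 = dim V0"
    "span N \<inter> K0 \<subseteq> {0}" "V0 \<subseteq> {x + y |x y. x \<in> span N \<and> y \<in> K0}"
    using subspace_complement[of V0 K0] unfolding K0_def by blast
  have "span N \<subseteq> V0" by (rule span_minimal[OF N(3) \<open>subspace V0\<close>])
  then have injective: "x = 0" if "x \<in> span N" "\<forall>k\<in>J. l k x = 0" for x
    using that N(5) unfolding K0_def by blast
  have "\<forall>k\<in>J. linear (l k)" using linear_l by blast
  then obtain I1 w where I1: "I1 \<subseteq> J" "finite I1" "card I1 = card N" "w ` I1 \<subseteq> span N"
    "span N \<subseteq> span (w ` I1)" and w: "\<forall>j\<in>I1. \<forall>k\<in>I1. l k (w j) = (if k = j then 1 else 0)"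
    by (rule biorthogonal_selection[OF N(1,2) _ injective])
  \<comment> \<open>Subtracting the components along the dual family makes the functionals vanish on V0.\<close>
  define l' where "l' i x = l i x - (\<Sum>j\<in>I1. l i (w j) * l j x)" for i x
  have linear_l': "linear (l' i)" if "i \<in> J" for i
  proof -
    have "linear (\<lambda>x. l i (w j) * l j x)" if "j \<in> I1" for j
      using linear_compose_scale_right[OF linear_l, of j "l i (w j)"] that I1(1) by auto
    then show ?thesis
      unfolding l'_def by (intro linear_compose_sub linear_l[OF that] linear_compose_sum) blast
  qed
  have l'_V0: "l' i x = 0" if i: "i \<in> J" and x: "x \<in> V0" for i x
  proof -
    obtain y z where yz: "y \<in> span N" "z \<in> K0" "x = y + z" using N(6) x by blast
    have "y = (\<Sum>j\<in>I1. l j y *\<^sub>R w j)"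
      using biorthogonal_expansion[OF I1(2) _ w] linear_l I1(1,5) yz(1) by blast
    then have "l i y = l i (\<Sum>j\<in>I1. l j y *\<^sub>R w j)" by (rule arg_cong)
    also have "\<dots> = (\<Sum>j\<in>I1. l i (w j) * l j y)"
      using linear_l[OF i] by (simp add: linear_sum linear_scale mult.commute)
    finally have "l' i y = 0" unfolding l'_def by simp
    moreover have "l j z = 0" if "j \<in> J" for j using yz(2) that unfolding K0_def by blast
    then have "l' i z = 0" using i I1(1) unfolding l'_def by (auto intro!: sum.neutral)
    ultimately show ?thesis using linear_add[OF linear_l'[OF i]] yz(3) by simp
  qed
  define J' where "J' = J - I1"
  have "supported_witness (I - C) J' (\<lambda>j. vec_restrict (I - C) (u j)) (\<lambda>j. vec_restrict (I - C) (v j)) l'"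
    unfolding supported_witness_def
  proof (intro conjI ballI)
    fix i j k assume ijk: "i \<in> J'" "j \<in> J'" "k \<in> J'"
    then have "i \<in> J" "j \<in> J" "k \<in> J" "j \<notin> I1" unfolding J'_def by auto
    let ?X = "vec_mul m (u j) (v k)"
    have "vec_mul m (vec_restrict (I - C) (u j)) (vec_restrict (I - C) (v k)) = ?X - vec_restrict C ?X"
      using supported_u[OF \<open>j \<in> J\<close>] C_subset_I by (auto simp: vec_eq_iff supported_on_def)
    moreover have "l' i (vec_restrict C ?X) = 0"
      using l'_V0[OF \<open>i \<in> J\<close>] by (simp add: V0_def supported_on_def)
    moreover have "l j' ?X = 0" if "j' \<in> I1" for j'
      using delta[OF _ \<open>j \<in> J\<close> \<open>k \<in> J\<close>, of j'] that I1(1) \<open>j \<notin> I1\<close> by auto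
    then have "l' i ?X = l i ?X" unfolding l'_def by simp
    ultimately show "l' i (vec_mul m (vec_restrict (I - C) (u j)) (vec_restrict (I - C) (v k)))
        = (if i = j \<and> j = k then 1 else 0)"
      using linear_diff[OF linear_l'[OF \<open>i \<in> J\<close>]] delta[OF \<open>i \<in> J\<close> \<open>j \<in> J\<close> \<open>k \<in> J\<close>] by simp
  qed (use finite_J linear_l' in \<open>auto simp: J'_def supported_on_def\<close>)
  moreover have "card J' + dim V0 = card J + dim K0"
    using card_Diff_subset[OF I1(2,1)] card_mono[OF finite_J I1(1)] I1(3) N(4) unfolding J'_def by simp
  ultimately show ?thesis by (rule that)
qed

lemma card_J_le: "card J \<le> dim (B \<inter> {b. vec_mul m (u j0) b = 0}) + dim K0 + 1"
proof -
  let ?M = "vec_mul m (u j0)"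
  have "card J = dim (B \<inter> {b. ?M b = 0}) + dim (?M ` B)"
    using dim_kernel_add_dim_image[OF linear_vec_mul_right, of B] dim_B unfolding B_def by simp
  define S where "S = V0 \<inter> {x. \<forall>i\<in>J - {j0}. l i x = 0}"
  have "subspace S"
    unfolding S_def V0_def using linear_l
    by (intro subspace_inter subspace_supported_on subspace_common_kernel) blast
  have "?M ` B \<subseteq> S"
  proof
    fix y assume "y \<in> ?M ` B"
    then obtain b where "b \<in> B" "y = ?M b" by blast
    then show "y \<in> S"
      using l_vec_mul_B[of b _ j0] j0_in_J unfolding S_def V0_def C_def supported_on_def by auto
  qed
  then have "dim (?M ` B) \<le> dim S" by (rule fd.dim_subset)
  also have "\<dots> \<le> dim (S \<inter> {x. l j0 x = 0}) + 1"
    by (rule dim_le_dim_Int_hyperplane_add_1[OF linear_l[OF j0_in_J] \<open>subspace S\<close>])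
  also have "S \<inter> {x. l j0 x = 0} = K0"
    unfolding S_def K0_def using j0_in_J by blast
  finally show ?thesis using \<open>card J = _\<close> by simp
qed

end

context nonsingular_bilinear
begin

theorem supported_witness_card_le:
  fixes I :: "'n::finite set"
  assumes "supported_witness I J u v l"
  shows "card J \<le> q * card I"
  using assms
proof (induction "card I" arbitrary: I J u v l rule: less_induct)
  case less
  show ?case
  proof (cases "J = {}")
    case False
    then obtain j0 where "j0 \<in> J" by blast
    obtain basis :: "('a^'n) set" where "finite_dimensional_real_vector basis"
      by (rule finite_dimensional_real_vector_vec)
    then interpret step: supported_witness_step m E q basis I J u v l j0
      using less.prems \<open>j0 \<in> J\<close> nonsingular_bilinear_axioms
      by (simp add: supported_witness_step_def supported_witness_step_axioms_def)
    obtain J1 u1 v1 l1 where J1: "supported_witness (I - step.C) J1 u1 v1 l1"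
      "card J1 = dim (step.B \<inter> {b. vec_mul m (u j0) b = 0})"
      by (rule step.kernel_witness)
    have kernel: "dim (step.B \<inter> {b. vec_mul m (u j0) b = 0}) \<le> q * card (I - step.C)"
      using less.hyps[OF step.card_Diff_C_less J1(1)] J1(2) by simp
    obtain J2 u2 v2 l2 where J2: "supported_witness (I - step.C) J2 u2 v2 l2"
      "card J2 + dim step.V0 = card J + dim step.K0"
      by (rule step.deflated_witness)
    have "card J2 \<le> q * card (I - step.C)"
      by (rule less.hyps[OF step.card_Diff_C_less J2(1)])
    moreover have "dim step.V0 \<le> 2 * q * card step.C"
      unfolding step.V0_def by (rule dim_supported_on_le)
    ultimately have "2 * card J \<le> 2 * q * card (I - step.C) + 2 * q * card step.C + 1"
      using step.card_J_le kernel J2(2) by linarith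
    then show ?thesis using step.card_I by (simp add: algebra_simps)
  qed simp
qed

lemma subrank_witness_vec_mul_le:
  assumes "subrank_witness (vec_mul m :: 'a^'n \<Rightarrow> 'a^'n \<Rightarrow> 'a^'n) r"
  shows "r \<le> q * CARD('n)"
proof -
  obtain u v and l :: "nat \<Rightarrow> 'a^'n \<Rightarrow> real" where "\<forall>i<r. linear (l i)"
    and "\<forall>i<r. \<forall>j<r. \<forall>k<r. l i (vec_mul m (u j) (v k)) = (if i = j \<and> j = k then 1 else 0)"
    using assms by (auto simp: subrank_witness_iff[OF bilinear_vec_mul[OF bilinear]])
  then have "supported_witness UNIV {..<r} u v l"
    unfolding supported_witness_def supported_on_def by auto
  then show ?thesis using supported_witness_card_le by fastforce
qed

theorem subrank_vec_mul:
  assumes "subrank_witness m q"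
  shows "subrank (vec_mul m :: 'a^'n \<Rightarrow> 'a^'n \<Rightarrow> 'a^'n) = CARD('n) * q"
    and "subrank m = q"
proof -
  show "subrank (vec_mul m :: 'a^'n \<Rightarrow> 'a^'n \<Rightarrow> 'a^'n) = CARD('n) * q"
    using subrank_witness_vec_mul[OF bilinear assms] subrank_witness_vec_mul_le
    by (intro subrank_eqI) (auto simp: mult.commute)
  have "r \<le> q" if "subrank_witness m r" for r
    using subrank_witness_vec_mul_le[OF subrank_witness_vec_mul[OF bilinear that, where 'n = 1]] by simp
  then show "subrank m = q" by (rule subrank_eqI[OF assms])
qed

end

section \<open>Complex numbers and quaternions\<close>

lemma vec_mul_times: "(\<lambda>a b. \<chi> i. a $ i * b $ i) = vec_mul (*)"
  by (intro ext) (simp add: vec_mul_def)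

interpretation complex: nonsingular_bilinear "(*) :: complex \<Rightarrow> complex \<Rightarrow> complex" "{1, \<i>}" 1
proof
  show "bilinear ((*) :: complex \<Rightarrow> complex \<Rightarrow> complex)" by (rule bilinear_times)
  show "span {1, \<i>} = UNIV"
  proof (rule top.extremum_uniqueI, rule subsetI)
    fix x :: complex
    have "Re x *\<^sub>R 1 + Im x *\<^sub>R \<i> \<in> span {1, \<i>}"
      by (intro span_add span_scale span_base) auto
    moreover have "Re x *\<^sub>R 1 + Im x *\<^sub>R \<i> = x" by (simp add: complex_eq_iff)
    ultimately show "x \<in> span {1, \<i>}" by simp
  qed
qed (auto simp: card_insert_if)

lemma subrank_witness_complex: "subrank_witness ((*) :: complex \<Rightarrow> complex \<Rightarrow> complex) 1"
  unfolding subrank_witness_iff[OF bilinear_times]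
  by (rule exI[of _ "\<lambda>_. 1"], rule exI[of _ "\<lambda>_. 1"], rule exI[of _ "\<lambda>_. Re"])
    (auto intro: linearI)

lemma bilinear_quat: "bilinear ((*) :: quat \<Rightarrow> quat \<Rightarrow> quat)"
  unfolding bilinear_def
  by (intro allI conjI linearI)
    (simp_all add: times_quat_def plus_quat_def scaleR_quat_def algebra_simps)

lemma quat_sum_squares_mult:
  "(qre (x * y))\<^sup>2 + (qi (x * y))\<^sup>2 + (qj (x * y))\<^sup>2 + (qk (x * y))\<^sup>2 =
    ((qre x)\<^sup>2 + (qi x)\<^sup>2 + (qj x)\<^sup>2 + (qk x)\<^sup>2) * ((qre y)\<^sup>2 + (qi y)\<^sup>2 + (qj y)\<^sup>2 + (qk y)\<^sup>2)"
  unfolding times_quat_def by simp algebra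

lemma quat_eq_0_iff_sum_squares: "x = 0 \<longleftrightarrow> (qre x)\<^sup>2 + (qi x)\<^sup>2 + (qj x)\<^sup>2 + (qk x)\<^sup>2 = 0"
  by (cases x) (simp add: zero_quat_def add_nonneg_eq_0_iff)

lemma quat_no_zero_divisors: "(x :: quat) * y = 0 \<Longrightarrow> x = 0 \<or> y = 0"
  by (simp add: quat_eq_0_iff_sum_squares[of "x * y"] quat_sum_squares_mult
      flip: quat_eq_0_iff_sum_squares)

interpretation quat: nonsingular_bilinear "(*) :: quat \<Rightarrow> quat \<Rightarrow> quat"
  "{Quat 1 0 0 0, Quat 0 1 0 0, Quat 0 0 1 0, Quat 0 0 0 1}" 2
proof
  show "span {Quat 1 0 0 0, Quat 0 1 0 0, Quat 0 0 1 0, Quat 0 0 0 1} = UNIV"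
  proof (rule top.extremum_uniqueI, rule subsetI)
    fix x :: quat
    have "qre x *\<^sub>R Quat 1 0 0 0 + qi x *\<^sub>R Quat 0 1 0 0 + qj x *\<^sub>R Quat 0 0 1 0 + qk x *\<^sub>R Quat 0 0 0 1
        \<in> span {Quat 1 0 0 0, Quat 0 1 0 0, Quat 0 0 1 0, Quat 0 0 0 1}"
      by (intro span_add span_scale span_base) auto
    then show "x \<in> span {Quat 1 0 0 0, Quat 0 1 0 0, Quat 0 0 1 0, Quat 0 0 0 1}"
      by (cases x) (simp add: scaleR_quat_def plus_quat_def)
  qed
qed (simp_all add: bilinear_quat quat_no_zero_divisors card_insert_if)

text \<open>Witness u = (1, i), v = (1, j), l = (real part, k-part): 1 * 1 = 1 and i * j = k,
  while the mixed products 1 * j = j and i * 1 = i have neither a real nor a k-part.\<close>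
lemma subrank_witness_quat: "subrank_witness ((*) :: quat \<Rightarrow> quat \<Rightarrow> quat) 2"
  unfolding subrank_witness_iff[OF bilinear_quat]
proof (intro exI conjI allI impI)
  let ?u = "\<lambda>j :: nat. if j = 0 then Quat 1 0 0 0 else Quat 0 1 0 0"
  let ?v = "\<lambda>j :: nat. if j = 0 then Quat 1 0 0 0 else Quat 0 0 1 0"
  let ?l = "\<lambda>(i :: nat) w. if i = 0 then qre w else qk w"
  show "linear (?l i)" for i
    by (rule linearI) (simp_all add: plus_quat_def scaleR_quat_def)
  show "?l i (?u j * ?v k) = (if i = j \<and> j = k then 1 else 0)" if "i < 2" "j < 2" "k < 2" for i j k
    using that by (auto simp: times_quat_def less_2_cases_iff)
qed

theorem corollary5p4:
  shows "subrank (\<lambda>(a::complex^'n) (b::complex^'n). \<chi> i. a$i * b$i)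
           = CARD('n) * subrank (\<lambda>(x::complex) (y::complex). x * y)
       \<and> subrank (\<lambda>(a::complex^'n) (b::complex^'n). \<chi> i. a$i * b$i) = CARD('n)
       \<and> subrank (\<lambda>(a::quat^'n) (b::quat^'n). \<chi> i. a$i * b$i)
           = CARD('n) * subrank (\<lambda>(x::quat) (y::quat). x * y)
       \<and> subrank (\<lambda>(a::quat^'n) (b::quat^'n). \<chi> i. a$i * b$i) = 2 * CARD('n)"
proof -
  have "subrank (vec_mul (*) :: complex^'n \<Rightarrow> _) = CARD('n) * 1" "subrank ((*) :: complex \<Rightarrow> _) = 1"
    by (rule complex.subrank_vec_mul[OF subrank_witness_complex])+
  moreover have "subrank (vec_mul (*) :: quat^'n \<Rightarrow> _) = CARD('n) * 2" "subrank ((*) :: quat \<Rightarrow> _) = 2"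
    by (rule quat.subrank_vec_mul[OF subrank_witness_quat])+
  ultimately show ?thesis unfolding vec_mul_times by simp
qed

end
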